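(* Let $k\ge 2$ and $R(z)=\sum_{l=1}^k\frac{\alpha_l}{z-p_l}$ with all $\alpha_l>0$, $p_1=-1$, $p_2=1$, and $p_l>1$ for $3\le l\le k$. Define $g(x)=\operatorname{Re}R\!\left(x+i\sqrt{1-x^2}\right)$ for $x\in(-1,1)$ (the real part of $R$ along the open upper unit half-circle). If $k\ge 3$, then $g$ is strictly decreasing on $(-1,1)$; if $k=2$, then $g$ is constant, equal to $\frac{\alpha_1-\alpha_2}{2}$. *)

theory Defs
  imports Complex_Main
begin

definition ratR :: "nat \<Rightarrow> (nat \<Rightarrow> real) \<Rightarrow> (nat \<Rightarrow> real) \<Rightarrow> complex \<Rightarrow> complex" where
  "ratR k \<alpha> p z = (\<Sum>l=1..k. complex_of_real (\<alpha> l) / (z - complex_of_real (p l)))"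

definition gfun :: "nat \<Rightarrow> (nat \<Rightarrow> real) \<Rightarrow> (nat \<Rightarrow> real) \<Rightarrow> real \<Rightarrow> real" where
  "gfun k \<alpha> p x = Re (ratR k \<alpha> p (Complex x (sqrt (1 - x\<^sup>2))))"

end

theory Submission
  imports Defs
begin

(* For a point z = x + i*sqrt(1 - x^2) of the open upper unit half-circle
   one has |z - q|^2 = 1 + q^2 - 2*q*x, so the real part of a single pole term
   a/(z - q) with real a, q is the rational function  pole_re a q x  defined below.
   Hence g is the sum of the pole_re terms of the poles of R.
   The two boundary poles contribute constants:  pole_re a (-1) = a/2 and
   pole_re a 1 = -a/2.  A pole outside the closed unit disc (q^2 > 1) with positive
   weight contributes a strictly decreasing function, because cross-multiplying
   two values reduces their comparison to the sign of (y - x)*(1 - q^2).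
   The theorem follows by splitting the sum over {1..k} into the poles 1, 2 and
   the poles 3..k: for k = 2 only the constant part remains, for k >= 3 the
   remaining nonempty sum is strictly decreasing. *)

text \<open>Real part of a/(z - q) at the point of the unit circle with real part x.\<close>
definition pole_re :: "real \<Rightarrow> real \<Rightarrow> real \<Rightarrow> real" where
  "pole_re a q x = a * (x - q) / (1 + q\<^sup>2 - 2 * q * x)"

lemma circle_dist_sq_pos:
  fixes x q :: real
  assumes "-1 < x" "x < 1"
  shows "0 < 1 + q\<^sup>2 - 2 * q * x"
proof -
  have "x\<^sup>2 < 1" using assms by (simp add: abs_square_less_1)
  moreover have "1 + q\<^sup>2 - 2 * q * x = (q - x)\<^sup>2 + (1 - x\<^sup>2)"
    by (simp add: power2_eq_square algebra_simps)
  ultimately show ?thesis by (smt (verit) zero_le_power2)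
qed

lemma Re_pole_on_half_circle:
  fixes x a q :: real
  assumes "-1 < x" "x < 1"
  shows "Re (complex_of_real a / (Complex x (sqrt (1 - x\<^sup>2)) - complex_of_real q))
         = pole_re a q x"
proof -
  have "(sqrt (1 - x\<^sup>2))\<^sup>2 = 1 - x\<^sup>2"
    using assms by (intro real_sqrt_pow2) (simp add: abs_square_less_1 less_imp_le)
  then have "(x - q)\<^sup>2 + (sqrt (1 - x\<^sup>2))\<^sup>2 = 1 + q\<^sup>2 - 2 * q * x"
    by (simp add: power2_eq_square algebra_simps)
  then show ?thesis by (simp add: Re_divide pole_re_def)
qed

lemma gfun_as_pole_sum:
  assumes "-1 < x" "x < 1"
  shows "gfun k \<alpha> p x = (\<Sum>l=1..k. pole_re (\<alpha> l) (p l) x)"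
  unfolding gfun_def ratR_def Re_sum using Re_pole_on_half_circle[OF assms] by simp

lemma pole_re_minus_one:
  assumes "-1 < x"
  shows "pole_re a (-1) x = a / 2"
  using assms by (simp add: pole_re_def field_simps)

lemma pole_re_one:
  assumes "x < 1"
  shows "pole_re a 1 x = - a / 2"
  using assms by (simp add: pole_re_def field_simps)

lemma pole_re_strict_antimono:
  fixes a q x y :: real
  assumes "-1 < x" "x < y" "y < 1" and "1 < q\<^sup>2" and "0 < a"
  shows "pole_re a q y < pole_re a q x"
proof -
  define d where "d t = 1 + q\<^sup>2 - 2 * q * t" for t
  have dx: "0 < d x" and dy: "0 < d y"
    using circle_dist_sq_pos assms unfolding d_def by auto
  have cross: "(y - q) * d x - (x - q) * d y = (y - x) * (1 - q\<^sup>2)"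
    unfolding d_def by (simp add: power2_eq_square algebra_simps)
  have "(y - x) * (1 - q\<^sup>2) < 0"
    using assms by (simp add: mult_pos_neg)
  with cross have "a * ((y - q) * d x) < a * ((x - q) * d y)"
    using assms(5) by simp
  with dx dy show ?thesis
    unfolding pole_re_def d_def[symmetric] by (simp add: divide_simps algebra_simps)
qed

theorem lemma3:
  fixes k :: nat and \<alpha> p :: "nat \<Rightarrow> real"
  assumes "k \<ge> 2"
    and "\<And>l. 1 \<le> l \<Longrightarrow> l \<le> k \<Longrightarrow> \<alpha> l > 0"
    and "p 1 = -1" and "p 2 = 1"
    and "\<And>l. 3 \<le> l \<Longrightarrow> l \<le> k \<Longrightarrow> p l > 1"
  shows "(k \<ge> 3 \<longrightarrow> (\<forall>x y. -1 < x \<and> x < y \<and> y < 1 \<longrightarrow> gfun k \<alpha> p y < gfun k \<alpha> p x))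
       \<and> (k = 2 \<longrightarrow> (\<forall>x. -1 < x \<and> x < 1 \<longrightarrow> gfun k \<alpha> p x = (\<alpha> 1 - \<alpha> 2) / 2))"
proof -
  let ?outer = "\<lambda>x. \<Sum>l=3..k. pole_re (\<alpha> l) (p l) x"
  have g_split: "gfun k \<alpha> p x = (\<alpha> 1 - \<alpha> 2) / 2 + ?outer x" if "-1 < x" "x < 1" for x
  proof -
    have "{1..k} = insert 1 (insert 2 {3..k})" using assms(1) by auto
    then have "gfun k \<alpha> p x = pole_re (\<alpha> 1) (-1) x + pole_re (\<alpha> 2) 1 x + ?outer x"
      using gfun_as_pole_sum[OF that] assms(3,4) by simp
    then show ?thesis using that by (simp add: pole_re_minus_one pole_re_one)
  qed
  have outer_decreasing: "?outer y < ?outer x" if "k \<ge> 3" "-1 < x" "x < y" "y < 1" for x y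
  proof (rule sum_strict_mono)
    fix l assume "l \<in> {3..k}"
    then have "1 < (p l)\<^sup>2" "0 < \<alpha> l" using assms(2,5) by (auto simp: one_less_power)
    then show "pole_re (\<alpha> l) (p l) y < pole_re (\<alpha> l) (p l) x"
      using that by (intro pole_re_strict_antimono) auto
  qed (use that in auto)
  show ?thesis
    using g_split outer_decreasing by auto
qed

end
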